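(* For every WS-HSA scheme, and every $u\in[U]$, $m\in[M]$, $n\in[N]$ with $\mathcal S_m\cap\mathcal T_n=\emptyset$ and $|(\mathcal S_m\cap\mathcal K_u)\cup\mathcal T_n|\le K-1$: (a) $H\big(\{Z_{i,j}\}_{(i,j)\in\mathcal S_m\cap\mathcal K_u}\mid\{Z_{i,j}\}_{(i,j)\in\mathcal T_n}\big)\ge|\mathcal S_m\cap\mathcal K_u|\,L$; (b) $H\big(\{Z_{i,j}\}_{(i,j)\in\mathcal K_{\mathcal U^{(m,n)}}}\mid\{Z_{i,j}\}_{(i,j)\in\mathcal T_n}\big)\ge(|\mathcal U^{(m,n)}|-1)L$ if $|\mathcal K_{\mathcal U^{(m,n)}}\cup\mathcal T_n|=K$, and $\ge|\mathcal U^{(m,n)}|\,L$ otherwise.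
   Context: Setup. Fix integers $U\ge 2$ and $V_1,\dots,V_U\ge 1$. Users are pairs $(u,v)$ with $u\in[U]$, $v\in[V_u]$; $\mathcal K_u=\{(u,v):v\in[V_u]\}$, $\mathcal K=\bigcup_u\mathcal K_u$, $K=|\mathcal K|$; for $\mathcal U\subseteq[U]$, $\mathcal K_{\mathcal U}=\bigcup_{u\in\mathcal U}\mathcal K_u$. Given are a family $\{\mathcal S_1,\dots,\mathcal S_M\}$ of subsets of $\mathcal K$ (security input sets) and a family $\{\mathcal T_1,\dots,\mathcal T_N\}$ of subsets of $\mathcal K$ (collusion sets), both closed under taking subsets. $\mathcal U^{(m,n)}=\{u\in[U]:\mathcal S_m\cap\mathcal K_u\ne\emptyset,\ \mathcal K_u\subseteq\mathcal S_m\cup\mathcal T_n\}$. A WS-HSA scheme with input length $L$ over a finite field $\mathbb F_q$ consists of jointly distributed random variables: inputs $W_{u,v}$, each uniform on $\mathbb F_q^L$; a source key $Z_\Sigma$; individual keys $Z_{u,v}$; messages $X_{u,v}$ and $Y_u$; entropies in base $q$. They satisfy: (i) $H(\{W_{u,v}\}_{\mathcal K},\{Z_{u,v}\}_{\mathcal K})=\sum_{\mathcal K}H(W_{u,v})+H(\{Z_{u,v}\}_{\mathcal K})$; (ii) $H(\{Z_{u,v}\}_{\mathcal K}\mid Z_\Sigma)=0$; (iii) $H(X_{u,v}\mid W_{u,v},Z_{u,v})=0$; (iv) $H(Y_u\mid\{X_{u,v}\}_{v\in[V_u]})=0$; (v) $H(\sum_{\mathcal K}W_{u,v}\mid Y_1,\dots,Y_U)=0$;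 (vi) $I(Y_1,\dots,Y_U;\{W_{u,v}\}_{\mathcal S_m}\mid\sum_{\mathcal K}W_{u,v},\{W_{i,j},Z_{i,j}\}_{\mathcal T_n})=0$ for all $m,n$; (vii) $I(\{X_{u,v}\}_{v\in[V_u]};\{W_{i,j}\}_{\mathcal S_m}\mid\{W_{i,j},Z_{i,j}\}_{\mathcal T_n})=0$ for all $u,m,n$. *)

theory Defs
  imports "HOL-Probability.Probability_Mass_Function"
begin

definition ent :: "real \<Rightarrow> 'w pmf \<Rightarrow> ('w \<Rightarrow> 'a) \<Rightarrow> real" where
  "ent b p X = (\<Sum>x \<in> X ` set_pmf p.
      - (measure_pmf.prob p (X -` {x}) * log b (measure_pmf.prob p (X -` {x}))))"

definition cent :: "real \<Rightarrow> 'w pmf \<Rightarrow> ('w \<Rightarrow> 'a) \<Rightarrow> ('w \<Rightarrow> 'c) \<Rightarrow> real" where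
  "cent b p X Y = ent b p (\<lambda>\<omega>. (X \<omega>, Y \<omega>)) - ent b p Y"

definition cmi :: "real \<Rightarrow> 'w pmf \<Rightarrow> ('w \<Rightarrow> 'a) \<Rightarrow> ('w \<Rightarrow> 'c) \<Rightarrow> ('w \<Rightarrow> 'd) \<Rightarrow> real" where
  "cmi b p X Y Z = ent b p (\<lambda>\<omega>. (X \<omega>, Z \<omega>)) + ent b p (\<lambda>\<omega>. (Y \<omega>, Z \<omega>))
     - ent b p (\<lambda>\<omega>. (X \<omega>, Y \<omega>, Z \<omega>)) - ent b p Z"

definition fam :: "('i \<Rightarrow> 'w \<Rightarrow> 'a) \<Rightarrow> 'i set \<Rightarrow> 'w \<Rightarrow> ('i \<Rightarrow> 'a)" where
  "fam F A = (\<lambda>\<omega>. restrict (\<lambda>k. F k \<omega>) A)"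

definition Kset_u :: "(nat \<Rightarrow> nat) \<Rightarrow> nat \<Rightarrow> (nat \<times> nat) set" where
  "Kset_u V u = {(u, v) | v. v \<in> {1..V u}}"

definition Kset :: "nat \<Rightarrow> (nat \<Rightarrow> nat) \<Rightarrow> (nat \<times> nat) set" where
  "Kset U V = (\<Union>u\<in>{1..U}. Kset_u V u)"

definition KsetU :: "(nat \<Rightarrow> nat) \<Rightarrow> nat set \<Rightarrow> (nat \<times> nat) set" where
  "KsetU V UU = (\<Union>u\<in>UU. Kset_u V u)"

definition Uset :: "nat \<Rightarrow> (nat \<Rightarrow> nat) \<Rightarrow> (nat \<times> nat) set \<Rightarrow> (nat \<times> nat) set \<Rightarrow> nat set" where
  "Uset U V Sm Tn = {u \<in> {1..U}. Sm \<inter> Kset_u V u \<noteq> {} \<and> Kset_u V u \<subseteq> Sm \<union> Tn}"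

definition subset_closed :: "nat \<Rightarrow> (nat \<Rightarrow> 'a set) \<Rightarrow> bool" where
  "subset_closed M S = (\<forall>m\<in>{1..M}. \<forall>A. A \<subseteq> S m \<longrightarrow> (\<exists>m'\<in>{1..M}. S m' = A))"

text \<open>F_q^L is represented by functions nat => F_q vanishing from index L on.\<close>
definition vecs :: "nat \<Rightarrow> (nat \<Rightarrow> 'f::zero) set" where
  "vecs L = {f. \<forall>i\<ge>L. f i = 0}"

end

theory Submission
  imports Defs
begin

text \<open>
  Fix a \<in> S_m \<inter> K_u. The relay messages of all users determine the sum of all inputs, so W_a
  is a function of X_a together with the inputs and keys of everybody else; since W_a is uniform
  on F_q^L and independent of those, H(X_a | (W,Z)_{K-{a}}) \<ge> L, and the chain rule gives
  H(X_A | (W,Z)_{K-A}) \<ge> |A| L for A = S_m \<inter> K_u. Relaxing the condition to (W,Z)_{T_n}, user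
  security allows W_A to be added to it for free; as X_A is a function of (W_A, Z_A) and the
  inputs are independent of the keys, the bound passes to H(Z_A | W_A, (W,Z)_{T_n}) = H(Z_A | Z_{T_n}).
  Part (b) repeats the argument with the relay messages Y_u of the users in U^(m,n) in place of
  the X's and server security in place of user security. Server security also conditions on the
  sum of all inputs; this is harmless as long as some input outside K_{U^(m,n)} \<union> T_n makes the
  sum independent of everything else, and otherwise one user of U^(m,n) is given up to free such
  an input, which costs L.
\<close>

section \<open>Functional dependence and entropy on a finite probability space\<close>

definition determines :: "'w pmf \<Rightarrow> ('w \<Rightarrow> 'b) \<Rightarrow> ('w \<Rightarrow> 'a) \<Rightarrow> bool" where
  "determines p Y X \<longleftrightarrow> (\<forall>\<omega>\<in>set_pmf p. \<forall>\<omega>'\<in>set_pmf p. Y \<omega> = Y \<omega>' \<longrightarrow> X \<omega> = X \<omega>')"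

lemma determinesI:
  "(\<And>\<omega> \<omega>'. \<omega> \<in> set_pmf p \<Longrightarrow> \<omega>' \<in> set_pmf p \<Longrightarrow> Y \<omega> = Y \<omega>' \<Longrightarrow> X \<omega> = X \<omega>')
    \<Longrightarrow> determines p Y X"
  unfolding determines_def by blast

lemma determinesD:
  "determines p Y X \<Longrightarrow> \<omega> \<in> set_pmf p \<Longrightarrow> \<omega>' \<in> set_pmf p \<Longrightarrow> Y \<omega> = Y \<omega>' \<Longrightarrow> X \<omega> = X \<omega>'"
  unfolding determines_def by blast

lemma fam_eq_iff: "fam F A \<omega> = fam F A \<omega>' \<longleftrightarrow> (\<forall>k\<in>A. F k \<omega> = F k \<omega>')"
  unfolding fam_def by (auto simp: fun_eq_iff restrict_def)

lemma determines_trans: "determines p Y X \<Longrightarrow> determines p Z Y \<Longrightarrow> determines p Z X"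
  unfolding determines_def by blast

lemma determines_pairI:
  "determines p G X \<Longrightarrow> determines p G Y \<Longrightarrow> determines p G (\<lambda>\<omega>. (X \<omega>, Y \<omega>))"
  unfolding determines_def by blast

lemma determines_fam_subset: "A \<subseteq> B \<Longrightarrow> determines p (fam F B) (fam F A)"
  by (rule determinesI) (auto simp: fam_eq_iff)

locale finite_entropy =
  fixes b :: real and p :: "'w pmf"
  assumes base_gt_1: "1 < b" and finite_support: "finite (set_pmf p)"
begin

abbreviation prob_at :: "('w \<Rightarrow> 'a) \<Rightarrow> 'w \<Rightarrow> real" where
  "prob_at X \<omega> \<equiv> measure_pmf.prob p (X -` {X \<omega>})"

lemma prob_vimage_eq_sum:
  "measure_pmf.prob p (X -` {x}) = (\<Sum>\<omega>\<in>set_pmf p. if X \<omega> = x then pmf p \<omega> else 0)"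
proof -
  have "measure_pmf.prob p (X -` {x}) = measure_pmf.prob p (X -` {x} \<inter> set_pmf p)"
    by (simp add: measure_Int_set_pmf)
  also have "\<dots> = sum (pmf p) (set_pmf p \<inter> X -` {x})"
    using finite_support by (simp add: measure_measure_pmf_finite Int_commute)
  finally show ?thesis
    using finite_support by (simp add: sum.inter_restrict)
qed

lemma sum_values_eq_sum_support:
  "(\<Sum>x\<in>X ` set_pmf p. measure_pmf.prob p (X -` {x}) * g x) = (\<Sum>\<omega>\<in>set_pmf p. pmf p \<omega> * g (X \<omega>))"
proof -
  have "(\<Sum>x\<in>X ` set_pmf p. measure_pmf.prob p (X -` {x}) * g x)
     = (\<Sum>x\<in>X ` set_pmf p. \<Sum>\<omega>\<in>set_pmf p. if X \<omega> = x then pmf p \<omega> * g x else 0)"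
    by (auto simp: prob_vimage_eq_sum sum_distrib_right intro!: sum.cong)
  also have "\<dots> = (\<Sum>\<omega>\<in>set_pmf p. \<Sum>x\<in>X ` set_pmf p. if X \<omega> = x then pmf p \<omega> * g x else 0)"
    by (rule sum.swap)
  also have "\<dots> = (\<Sum>\<omega>\<in>set_pmf p. pmf p \<omega> * g (X \<omega>))"
    using finite_support by (intro sum.cong) (auto simp: sum.delta)
  finally show ?thesis .
qed

lemma sum_prob_values: "(\<Sum>x\<in>X ` set_pmf p. measure_pmf.prob p (X -` {x})) = 1"
  using sum_values_eq_sum_support[of X "\<lambda>_. 1"] sum_pmf_eq_1[OF finite_support order_refl] by simp

lemma sum_prob_pair_values:
  "(\<Sum>x\<in>X ` set_pmf p. measure_pmf.prob p ((\<lambda>\<omega>. (X \<omega>, Z \<omega>)) -` {(x, z)}))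
   = measure_pmf.prob p (Z -` {z})"
proof -
  have "(\<Sum>x\<in>X ` set_pmf p. measure_pmf.prob p ((\<lambda>\<omega>. (X \<omega>, Z \<omega>)) -` {(x, z)}))
     = (\<Sum>x\<in>X ` set_pmf p. \<Sum>\<omega>\<in>set_pmf p. if x = X \<omega> then (if Z \<omega> = z then pmf p \<omega> else 0) else 0)"
    unfolding prob_vimage_eq_sum by (intro sum.cong refl) auto
  also have "\<dots> = (\<Sum>\<omega>\<in>set_pmf p. \<Sum>x\<in>X ` set_pmf p. if x = X \<omega> then (if Z \<omega> = z then pmf p \<omega> else 0) else 0)"
    by (rule sum.swap)
  also have "\<dots> = (\<Sum>\<omega>\<in>set_pmf p. if Z \<omega> = z then pmf p \<omega> else 0)"
    using finite_support by (intro sum.cong refl) (simp add: sum.delta)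
  finally show ?thesis unfolding prob_vimage_eq_sum .
qed

lemma prob_at_pos:
  assumes "\<omega> \<in> set_pmf p"
  shows "0 < prob_at X \<omega>"
proof -
  have "pmf p \<omega> \<le> prob_at X \<omega>"
    using measure_pmf.finite_measure_mono[of "{\<omega>}" "X -` {X \<omega>}" p] by (simp add: measure_pmf_single)
  then show ?thesis
    using pmf_positive[OF assms] by linarith
qed

lemma prob_at_mono:
  assumes "determines p Y X" "\<omega> \<in> set_pmf p"
  shows "prob_at Y \<omega> \<le> prob_at X \<omega>"
  unfolding prob_vimage_eq_sum
proof (intro sum_mono)
  fix \<omega>' assume "\<omega>' \<in> set_pmf p"
  then have "Y \<omega>' = Y \<omega> \<Longrightarrow> X \<omega>' = X \<omega>"
    using assms determinesD by metis
  then show "(if Y \<omega>' = Y \<omega> then pmf p \<omega>' else 0) \<le> (if X \<omega>' = X \<omega> then pmf p \<omega>' else 0)"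
    by auto
qed

lemma ent_eq_sum_support:
  "ent b p X = - (\<Sum>\<omega>\<in>set_pmf p. pmf p \<omega> * log b (prob_at X \<omega>))"
proof -
  have "ent b p X = - (\<Sum>x\<in>X ` set_pmf p. measure_pmf.prob p (X -` {x}) * log b (measure_pmf.prob p (X -` {x})))"
    unfolding ent_def by (simp add: sum_negf)
  then show ?thesis
    by (subst (asm) sum_values_eq_sum_support)
qed

lemma ent_mono:
  assumes "determines p Y X"
  shows "ent b p X \<le> ent b p Y"
proof -
  have "log b (prob_at Y \<omega>) \<le> log b (prob_at X \<omega>)" if "\<omega> \<in> set_pmf p" for \<omega>
    using prob_at_mono[OF assms that] prob_at_pos[OF that, of Y] base_gt_1 by simp
  then show ?thesis
    unfolding ent_eq_sum_support by (simp add: sum_mono mult_left_mono)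
qed

lemma ent_eqI:
  "(\<And>\<omega> \<omega>'. \<omega> \<in> set_pmf p \<Longrightarrow> \<omega>' \<in> set_pmf p \<Longrightarrow> X \<omega> = X \<omega>' \<longleftrightarrow> Y \<omega> = Y \<omega>')
    \<Longrightarrow> ent b p X = ent b p Y"
  by (intro antisym ent_mono determinesI) auto

lemma ent_const: "ent b p (\<lambda>_. c) = 0"
  unfolding ent_eq_sum_support by simp

lemma sum_pmf_log_nonpos:
  assumes pos: "\<And>\<omega>. \<omega> \<in> set_pmf p \<Longrightarrow> 0 < t \<omega>"
    and le_1: "(\<Sum>\<omega>\<in>set_pmf p. pmf p \<omega> * t \<omega>) \<le> 1"
  shows "(\<Sum>\<omega>\<in>set_pmf p. pmf p \<omega> * log b (t \<omega>)) \<le> 0"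
proof -
  have "(\<Sum>\<omega>\<in>set_pmf p. pmf p \<omega> * log b (t \<omega>)) \<le> (\<Sum>\<omega>\<in>set_pmf p. pmf p \<omega> * ((t \<omega> - 1) / ln b))"
  proof (intro sum_mono mult_left_mono)
    fix \<omega> assume "\<omega> \<in> set_pmf p"
    show "log b (t \<omega>) \<le> (t \<omega> - 1) / ln b"
      using ln_le_minus_one[OF pos[OF \<open>\<omega> \<in> set_pmf p\<close>]] base_gt_1
      unfolding log_def by (simp add: divide_right_mono)
  qed simp
  also have "\<dots> = ((\<Sum>\<omega>\<in>set_pmf p. pmf p \<omega> * t \<omega>) - (\<Sum>\<omega>\<in>set_pmf p. pmf p \<omega>)) / ln b"
    by (simp add: sum_divide_distrib[symmetric] sum_subtractf[symmetric] right_diff_distrib)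
  also have "\<dots> \<le> 0"
    using le_1 sum_pmf_eq_1[OF finite_support order_refl] base_gt_1 by (simp add: divide_nonpos_pos)
  finally show ?thesis .
qed

lemma ent_le_log_card:
  assumes "finite F" and range: "\<And>\<omega>. \<omega> \<in> set_pmf p \<Longrightarrow> X \<omega> \<in> F"
  shows "ent b p X \<le> log b (card F)"
proof -
  have card_pos: "0 < real (card F)"
    using set_pmf_not_empty[of p] range \<open>finite F\<close> card_gt_0_iff by fastforce
  define t where "t \<omega> = 1 / (prob_at X \<omega> * card F)" for \<omega>
  have t_pos: "0 < t \<omega>" and log_t: "log b (t \<omega>) = - log b (prob_at X \<omega>) - log b (card F)"
    if "\<omega> \<in> set_pmf p" for \<omega>
    using prob_at_pos[OF that, of X] card_pos by (simp_all add: t_def log_mult log_divide)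
  have "(\<Sum>\<omega>\<in>set_pmf p. pmf p \<omega> * t \<omega>)
      = (\<Sum>x\<in>X ` set_pmf p. measure_pmf.prob p (X -` {x}) * (1 / (measure_pmf.prob p (X -` {x}) * card F)))"
    unfolding t_def by (rule sum_values_eq_sum_support[symmetric])
  also have "\<dots> = (\<Sum>x\<in>X ` set_pmf p. 1 / card F)"
    by (intro sum.cong) (auto dest: prob_at_pos[of _ X])
  also have "\<dots> = card (X ` set_pmf p) / card F"
    by simp
  also have "\<dots> \<le> 1"
    using card_pos card_mono[OF \<open>finite F\<close>, of "X ` set_pmf p"] range by auto
  finally have "(\<Sum>\<omega>\<in>set_pmf p. pmf p \<omega> * log b (t \<omega>)) \<le> 0"
    using t_pos by (intro sum_pmf_log_nonpos)
  moreover have "(\<Sum>\<omega>\<in>set_pmf p. pmf p \<omega> * log b (t \<omega>)) = ent b p X - log b (card F)"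
    unfolding ent_eq_sum_support using sum_pmf_eq_1[OF finite_support order_refl]
    by (simp add: log_t right_diff_distrib sum_subtractf sum_negf sum_distrib_right[symmetric])
  ultimately show ?thesis by simp
qed

lemma range_if_uniform:
  assumes "finite F" "F \<noteq> {}" and unif: "\<forall>f\<in>F. measure_pmf.prob p (X -` {f}) = 1 / real (card F)"
  shows "\<omega> \<in> set_pmf p \<Longrightarrow> X \<omega> \<in> F"
proof (rule ccontr)
  assume \<omega>: "\<omega> \<in> set_pmf p" and "X \<omega> \<notin> F"
  have "(\<Sum>\<omega>\<in>set_pmf p. if X \<omega> \<in> F then pmf p \<omega> else 0) = (\<Sum>f\<in>F. measure_pmf.prob p (X -` {f}))"
    unfolding prob_vimage_eq_sum
    using \<open>finite F\<close> by (subst sum.swap) (auto simp: sum.delta' intro!: sum.cong)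
  also have "\<dots> = 1"
    using unif \<open>finite F\<close> \<open>F \<noteq> {}\<close> by simp
  finally have "(\<Sum>\<omega>\<in>set_pmf p. pmf p \<omega> - (if X \<omega> \<in> F then pmf p \<omega> else 0)) = 0"
    using sum_pmf_eq_1[OF finite_support order_refl] by (simp add: sum_subtractf)
  moreover have "pmf p \<omega> \<le> (\<Sum>\<omega>\<in>set_pmf p. pmf p \<omega> - (if X \<omega> \<in> F then pmf p \<omega> else 0))"
    using member_le_sum[OF \<omega> _ finite_support, of "\<lambda>\<omega>. pmf p \<omega> - (if X \<omega> \<in> F then pmf p \<omega> else 0)"]
      \<open>X \<omega> \<notin> F\<close> by simp
  ultimately show False
    using pmf_positive[OF \<omega>] by simp
qed

lemma ent_uniform:
  assumes "finite F" "F \<noteq> {}" and unif: "\<forall>f\<in>F. measure_pmf.prob p (X -` {f}) = 1 / real (card F)"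
  shows "ent b p X = log b (card F)"
proof -
  have "ent b p X = - (\<Sum>\<omega>\<in>set_pmf p. pmf p \<omega> * log b (1 / real (card F)))"
    unfolding ent_eq_sum_support using range_if_uniform[OF assms] unif by (simp cong: sum.cong)
  also have "\<dots> = log b (card F)"
    using sum_pmf_eq_1[OF finite_support order_refl] \<open>finite F\<close> \<open>F \<noteq> {}\<close> base_gt_1
    by (simp add: sum_negf sum_distrib_right[symmetric] log_divide)
  finally show ?thesis .
qed

lemma sum_pmf_submodularity_ratio_le_1:
  "(\<Sum>\<omega>\<in>set_pmf p. pmf p \<omega> * (prob_at (\<lambda>\<omega>. (X \<omega>, Z \<omega>)) \<omega> * prob_at (\<lambda>\<omega>. (Y \<omega>, Z \<omega>)) \<omega>
      / (prob_at (\<lambda>\<omega>. (X \<omega>, Y \<omega>, Z \<omega>)) \<omega> * prob_at Z \<omega>))) \<le> 1"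
proof -
  let ?V = "\<lambda>\<omega>. (X \<omega>, Y \<omega>, Z \<omega>)"
  define PV where "PV v = measure_pmf.prob p (?V -` {v})" for v
  define PXZ where "PXZ v = measure_pmf.prob p ((\<lambda>\<omega>. (X \<omega>, Z \<omega>)) -` {v})" for v
  define PYZ where "PYZ v = measure_pmf.prob p ((\<lambda>\<omega>. (Y \<omega>, Z \<omega>)) -` {v})" for v
  define PZ where "PZ z = measure_pmf.prob p (Z -` {z})" for z
  define h where "h v = (case v of (x, y, z) \<Rightarrow> PXZ (x, z) * PYZ (y, z) / PZ z)" for v
  have "(\<Sum>\<omega>\<in>set_pmf p. pmf p \<omega> * (prob_at (\<lambda>\<omega>. (X \<omega>, Z \<omega>)) \<omega> * prob_at (\<lambda>\<omega>. (Y \<omega>, Z \<omega>)) \<omega>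
      / (prob_at ?V \<omega> * prob_at Z \<omega>)))
    = (\<Sum>v\<in>?V ` set_pmf p. PV v * (h v / PV v))"
    unfolding PV_def
    by (subst sum_values_eq_sum_support) (simp add: h_def PXZ_def PYZ_def PZ_def ac_simps)
  also have "\<dots> = (\<Sum>v\<in>?V ` set_pmf p. h v)"
    by (intro sum.cong) (auto simp: PV_def dest: prob_at_pos[of _ ?V])
  also have "\<dots> \<le> (\<Sum>v\<in>X ` set_pmf p \<times> Y ` set_pmf p \<times> Z ` set_pmf p. h v)"
  proof (rule sum_mono2)
    show "0 \<le> h v" for v
      unfolding h_def PXZ_def PYZ_def PZ_def by (auto split: prod.split)
  qed (use finite_support in auto)
  also have "\<dots> = (\<Sum>x\<in>X ` set_pmf p. \<Sum>y\<in>Y ` set_pmf p. \<Sum>z\<in>Z ` set_pmf p. h (x, y, z))"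
    by (simp add: sum.cartesian_product)
  also have "\<dots> = (\<Sum>z\<in>Z ` set_pmf p. \<Sum>x\<in>X ` set_pmf p. \<Sum>y\<in>Y ` set_pmf p. h (x, y, z))"
    by (subst sum.swap) (simp add: sum.swap[of _ "Y ` set_pmf p"])
  also have "\<dots> = (\<Sum>z\<in>Z ` set_pmf p. (\<Sum>x\<in>X ` set_pmf p. PXZ (x, z)) * (\<Sum>y\<in>Y ` set_pmf p. PYZ (y, z)) / PZ z)"
    unfolding h_def by (simp add: sum_product sum_divide_distrib)
  also have "\<dots> = (\<Sum>z\<in>Z ` set_pmf p. PZ z)"
    using prob_at_pos
    by (intro sum.cong) (auto simp: PXZ_def PYZ_def PZ_def sum_prob_pair_values)
  also have "\<dots> = 1"
    unfolding PZ_def by (rule sum_prob_values)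
  finally show ?thesis .
qed

lemma ent_submodular:
  "ent b p (\<lambda>\<omega>. (X \<omega>, Y \<omega>, Z \<omega>)) + ent b p Z
   \<le> ent b p (\<lambda>\<omega>. (X \<omega>, Z \<omega>)) + ent b p (\<lambda>\<omega>. (Y \<omega>, Z \<omega>))"
proof -
  let ?V = "\<lambda>\<omega>. (X \<omega>, Y \<omega>, Z \<omega>)"
  let ?XZ = "\<lambda>\<omega>. (X \<omega>, Z \<omega>)"
  let ?YZ = "\<lambda>\<omega>. (Y \<omega>, Z \<omega>)"
  define t where "t \<omega> = prob_at ?XZ \<omega> * prob_at ?YZ \<omega> / (prob_at ?V \<omega> * prob_at Z \<omega>)" for \<omega>
  have "0 < t \<omega>"
    and "log b (t \<omega>) = log b (prob_at ?XZ \<omega>) + log b (prob_at ?YZ \<omega>) - log b (prob_at ?V \<omega>) - log b (prob_at Z \<omega>)"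
    if "\<omega> \<in> set_pmf p" for \<omega>
    using prob_at_pos[OF that, of ?XZ] prob_at_pos[OF that, of ?YZ] prob_at_pos[OF that, of ?V]
      prob_at_pos[OF that, of Z]
    by (simp_all add: t_def log_mult log_divide)
  then have "ent b p ?V + ent b p Z - ent b p ?XZ - ent b p ?YZ = (\<Sum>\<omega>\<in>set_pmf p. pmf p \<omega> * log b (t \<omega>))"
    unfolding ent_eq_sum_support
    by (simp add: sum_subtractf sum.distrib distrib_left right_diff_distrib cong: sum.cong)
  also have "\<dots> \<le> 0"
    using \<open>\<And>\<omega>. \<omega> \<in> set_pmf p \<Longrightarrow> 0 < t \<omega>\<close> sum_pmf_submodularity_ratio_le_1[of X Z Y]
    by (intro sum_pmf_log_nonpos) (simp_all add: t_def)
  finally show ?thesis by simp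
qed

lemma ent_pair_le_add: "ent b p (\<lambda>\<omega>. (X \<omega>, Y \<omega>)) \<le> ent b p X + ent b p Y"
proof -
  have "ent b p (\<lambda>\<omega>. (X \<omega>, Y \<omega>, ())) + ent b p (\<lambda>_. ())
     \<le> ent b p (\<lambda>\<omega>. (X \<omega>, ())) + ent b p (\<lambda>\<omega>. (Y \<omega>, ()))"
    by (rule ent_submodular)
  moreover have "ent b p (\<lambda>\<omega>. (X \<omega>, Y \<omega>, ())) = ent b p (\<lambda>\<omega>. (X \<omega>, Y \<omega>))"
    by (rule ent_eqI) simp
  moreover have "ent b p (\<lambda>\<omega>. (X \<omega>, ())) = ent b p X" "ent b p (\<lambda>\<omega>. (Y \<omega>, ())) = ent b p Y"
    by (rule ent_eqI, simp)+
  ultimately show ?thesis by (simp add: ent_const)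
qed

lemma ent_fam_le_sum: "finite A \<Longrightarrow> ent b p (fam F A) \<le> (\<Sum>k\<in>A. ent b p (F k))"
proof (induction A rule: finite_induct)
  case empty
  have "ent b p (fam F {}) = ent b p (\<lambda>_. ())"
    by (rule ent_eqI) (simp add: fam_eq_iff)
  then show ?case by (simp add: ent_const)
next
  case (insert a A)
  have "ent b p (fam F (insert a A)) = ent b p (\<lambda>\<omega>. (F a \<omega>, fam F A \<omega>))"
    by (rule ent_eqI) (auto simp: fam_eq_iff)
  then show ?case
    using insert ent_pair_le_add[of "F a" "fam F A"] by simp
qed

lemma cent_nonneg: "0 \<le> cent b p X Y"
  unfolding cent_def using ent_mono[of "\<lambda>\<omega>. (X \<omega>, Y \<omega>)" Y] by (auto intro: determinesI)

lemma cent_le_ent: "cent b p X Y \<le> ent b p X"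
  unfolding cent_def using ent_pair_le_add[of X Y] by simp

lemma cent_mono_cond:
  assumes "determines p R G"
  shows "cent b p X R \<le> cent b p X G"
proof -
  have "ent b p (\<lambda>\<omega>. (X \<omega>, R \<omega>, G \<omega>)) + ent b p G
     \<le> ent b p (\<lambda>\<omega>. (X \<omega>, G \<omega>)) + ent b p (\<lambda>\<omega>. (R \<omega>, G \<omega>))"
    by (rule ent_submodular)
  moreover have "ent b p (\<lambda>\<omega>. (R \<omega>, G \<omega>)) = ent b p R"
    by (intro ent_eqI) (auto dest: determinesD[OF assms])
  moreover have "ent b p (\<lambda>\<omega>. (X \<omega>, R \<omega>, G \<omega>)) = ent b p (\<lambda>\<omega>. (X \<omega>, R \<omega>))"
    by (intro ent_eqI) (auto dest: determinesD[OF assms])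
  ultimately show ?thesis
    unfolding cent_def by linarith
qed

lemma cent_mono_left:
  assumes "determines p X X'"
  shows "cent b p X' R \<le> cent b p X R"
proof -
  have "determines p (\<lambda>\<omega>. (X \<omega>, R \<omega>)) (\<lambda>\<omega>. (X' \<omega>, R \<omega>))"
    by (rule determinesI) (auto dest: determinesD[OF assms])
  then show ?thesis
    unfolding cent_def by (simp add: ent_mono)
qed

lemma cent_le_cent_if_determines:
  assumes "determines p (\<lambda>\<omega>. (X \<omega>, R \<omega>)) W"
  shows "cent b p W R \<le> cent b p X R"
proof -
  have "ent b p (\<lambda>\<omega>. (W \<omega>, R \<omega>)) \<le> ent b p (\<lambda>\<omega>. (W \<omega>, X \<omega>, R \<omega>))"
    by (intro ent_mono determinesI) simp
  also have "\<dots> = ent b p (\<lambda>\<omega>. (X \<omega>, R \<omega>))"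
    by (rule ent_eqI) (auto dest: determinesD[OF assms])
  finally show ?thesis
    unfolding cent_def by simp
qed

lemma cent_eq_ent_if_determined:
  assumes "cent b p X G = ent b p X" and "determines p G G'"
  shows "cent b p X G' = ent b p X"
  using cent_mono_cond[OF assms(2), of X] cent_le_ent[of X G'] assms(1) by linarith

lemma cent_fam_insert:
  "cent b p (fam F (insert a A)) R
   = cent b p (F a) (\<lambda>\<omega>. (fam F A \<omega>, R \<omega>)) + cent b p (fam F A) R"
proof -
  have "ent b p (\<lambda>\<omega>. (fam F (insert a A) \<omega>, R \<omega>)) = ent b p (\<lambda>\<omega>. (F a \<omega>, fam F A \<omega>, R \<omega>))"
    by (rule ent_eqI) (auto simp: fam_eq_iff)
  then show ?thesis
    unfolding cent_def by simp
qed

lemma prob_at_pair_add_le: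
  assumes "\<omega> \<in> set_pmf p" "\<omega>' \<in> set_pmf p" "Y \<omega>' = Y \<omega>" "X \<omega>' \<noteq> X \<omega>"
  shows "prob_at (\<lambda>\<omega>. (X \<omega>, Y \<omega>)) \<omega> + pmf p \<omega>' \<le> prob_at Y \<omega>"
proof -
  have "prob_at Y \<omega> - prob_at (\<lambda>\<omega>. (X \<omega>, Y \<omega>)) \<omega>
      = (\<Sum>\<omega>''\<in>set_pmf p. if Y \<omega>'' = Y \<omega> \<and> X \<omega>'' \<noteq> X \<omega> then pmf p \<omega>'' else 0)"
    unfolding prob_vimage_eq_sum sum_subtractf[symmetric] by (intro sum.cong) auto
  also have "\<dots> \<ge> pmf p \<omega>'"
    using member_le_sum[OF assms(2) _ finite_support, of "\<lambda>\<omega>''. if Y \<omega>'' = Y \<omega> \<and> X \<omega>'' \<noteq> X \<omega> then pmf p \<omega>'' else 0"]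
      assms(3,4) by simp
  finally show ?thesis by simp
qed

lemma determines_if_cent_eq_0:
  assumes "cent b p X Y = 0"
  shows "determines p Y X"
proof (rule determinesI, rule ccontr)
  let ?XY = "\<lambda>\<omega>. (X \<omega>, Y \<omega>)"
  fix \<omega> \<omega>' assume \<omega>: "\<omega> \<in> set_pmf p" and \<omega>': "\<omega>' \<in> set_pmf p"
    and "Y \<omega> = Y \<omega>'" "X \<omega> \<noteq> X \<omega>'"
  have XY_Y: "determines p ?XY Y"
    by (rule determinesI) simp
  have le: "log b (prob_at ?XY \<omega>) \<le> log b (prob_at Y \<omega>)" if "\<omega> \<in> set_pmf p" for \<omega>
    using prob_at_mono[OF XY_Y that] prob_at_pos[OF that, of ?XY] base_gt_1 by simp
  have sum_0: "(\<Sum>\<omega>\<in>set_pmf p. pmf p \<omega> * (log b (prob_at Y \<omega>) - log b (prob_at ?XY \<omega>))) = 0"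
    using assms unfolding cent_def ent_eq_sum_support by (simp add: algebra_simps sum_subtractf)
  have "0 \<le> pmf p \<omega> * (log b (prob_at Y \<omega>) - log b (prob_at ?XY \<omega>))"
    if "\<omega> \<in> set_pmf p" for \<omega>
    using le[OF that] by simp
  then have "pmf p \<omega> * (log b (prob_at Y \<omega>) - log b (prob_at ?XY \<omega>)) = 0"
    using iffD1[OF sum_nonneg_eq_0_iff[OF finite_support] sum_0] \<omega> by blast
  then have "log b (prob_at Y \<omega>) = log b (prob_at ?XY \<omega>)"
    using pmf_positive[OF \<omega>] by simp
  then have "prob_at Y \<omega> = prob_at ?XY \<omega>"
    using prob_at_pos[OF \<omega>, of Y] prob_at_pos[OF \<omega>, of ?XY] log_inj[OF base_gt_1]
    unfolding inj_on_def by auto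
  moreover have "prob_at ?XY \<omega> + pmf p \<omega>' \<le> prob_at Y \<omega>"
    using prob_at_pair_add_le[OF \<omega> \<omega>', of Y X] \<open>Y \<omega> = Y \<omega>'\<close> \<open>X \<omega> \<noteq> X \<omega>'\<close> by simp
  ultimately show False
    using pmf_positive[OF \<omega>'] by simp
qed

lemma cmi_eq_cent_diff: "cmi b p X Y Z = cent b p X Z - cent b p X (\<lambda>\<omega>. (Y \<omega>, Z \<omega>))"
  unfolding cmi_def cent_def by simp

lemma cmi_nonneg: "0 \<le> cmi b p X Y Z"
  unfolding cmi_def using ent_submodular[of X Y Z] by linarith

lemma cmi_commute: "cmi b p X Y Z = cmi b p Y X Z"
proof -
  have "ent b p (\<lambda>\<omega>. (X \<omega>, Y \<omega>, Z \<omega>)) = ent b p (\<lambda>\<omega>. (Y \<omega>, X \<omega>, Z \<omega>))"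
    by (rule ent_eqI) auto
  then show ?thesis
    unfolding cmi_def by linarith
qed

lemma cmi_mono_left:
  assumes "determines p X X'"
  shows "cmi b p X' Y Z \<le> cmi b p X Y Z"
proof -
  have "ent b p (\<lambda>\<omega>. (X \<omega>, Y \<omega>, (X' \<omega>, Z \<omega>))) + ent b p (\<lambda>\<omega>. (X' \<omega>, Z \<omega>))
     \<le> ent b p (\<lambda>\<omega>. (X \<omega>, (X' \<omega>, Z \<omega>))) + ent b p (\<lambda>\<omega>. (Y \<omega>, (X' \<omega>, Z \<omega>)))"
    by (rule ent_submodular)
  moreover have "ent b p (\<lambda>\<omega>. (X \<omega>, Y \<omega>, (X' \<omega>, Z \<omega>))) = ent b p (\<lambda>\<omega>. (X \<omega>, Y \<omega>, Z \<omega>))"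
    by (rule ent_eqI) (auto dest: determinesD[OF assms])
  moreover have "ent b p (\<lambda>\<omega>. (X \<omega>, (X' \<omega>, Z \<omega>))) = ent b p (\<lambda>\<omega>. (X \<omega>, Z \<omega>))"
    by (rule ent_eqI) (auto dest: determinesD[OF assms])
  moreover have "ent b p (\<lambda>\<omega>. (Y \<omega>, (X' \<omega>, Z \<omega>))) = ent b p (\<lambda>\<omega>. (X' \<omega>, Y \<omega>, Z \<omega>))"
    by (rule ent_eqI) auto
  ultimately show ?thesis
    unfolding cmi_def by linarith
qed

lemma cmi_mono:
  assumes "determines p X X'" "determines p Y Y'"
  shows "cmi b p X' Y' Z \<le> cmi b p X Y Z"
  using cmi_mono_left[OF assms(1), of Y' Z] cmi_mono_left[OF assms(2), of X Z]
    cmi_commute[of X Y' Z] cmi_commute[of X Y Z]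
  by linarith

lemma cmi_cong_cond:
  assumes "\<And>\<omega> \<omega>'. \<omega> \<in> set_pmf p \<Longrightarrow> \<omega>' \<in> set_pmf p \<Longrightarrow> Z \<omega> = Z \<omega>' \<longleftrightarrow> Z' \<omega> = Z' \<omega>'"
  shows "cmi b p X Y Z = cmi b p X Y Z'"
proof -
  have "ent b p (\<lambda>\<omega>. (X \<omega>, Z \<omega>)) = ent b p (\<lambda>\<omega>. (X \<omega>, Z' \<omega>))"
    "ent b p (\<lambda>\<omega>. (Y \<omega>, Z \<omega>)) = ent b p (\<lambda>\<omega>. (Y \<omega>, Z' \<omega>))"
    "ent b p (\<lambda>\<omega>. (X \<omega>, Y \<omega>, Z \<omega>)) = ent b p (\<lambda>\<omega>. (X \<omega>, Y \<omega>, Z' \<omega>))"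
    "ent b p Z = ent b p Z'"
    using assms by (intro ent_eqI; simp)+
  then show ?thesis
    unfolding cmi_def by simp
qed

lemma cmi_drop_independent_cond:
  assumes indep: "cent b p S (\<lambda>\<omega>. (Y \<omega>, W \<omega>, C \<omega>)) = ent b p S"
  shows "cmi b p Y W (\<lambda>\<omega>. (S \<omega>, C \<omega>)) = cmi b p Y W C"
proof -
  have split: "ent b p (\<lambda>\<omega>. (S \<omega>, G \<omega>)) = ent b p S + ent b p G"
    if "determines p (\<lambda>\<omega>. (Y \<omega>, W \<omega>, C \<omega>)) G" for G :: "'w \<Rightarrow> 'g"
    using cent_eq_ent_if_determined[OF indep that] unfolding cent_def by simp
  have "ent b p (\<lambda>\<omega>. (Y \<omega>, (S \<omega>, C \<omega>))) = ent b p (\<lambda>\<omega>. (S \<omega>, (Y \<omega>, C \<omega>)))"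
    "ent b p (\<lambda>\<omega>. (W \<omega>, (S \<omega>, C \<omega>))) = ent b p (\<lambda>\<omega>. (S \<omega>, (W \<omega>, C \<omega>)))"
    "ent b p (\<lambda>\<omega>. (Y \<omega>, W \<omega>, (S \<omega>, C \<omega>))) = ent b p (\<lambda>\<omega>. (S \<omega>, (Y \<omega>, W \<omega>, C \<omega>)))"
    by (rule ent_eqI; auto)+
  moreover have "ent b p (\<lambda>\<omega>. (S \<omega>, (Y \<omega>, C \<omega>))) = ent b p S + ent b p (\<lambda>\<omega>. (Y \<omega>, C \<omega>))"
    "ent b p (\<lambda>\<omega>. (S \<omega>, (W \<omega>, C \<omega>))) = ent b p S + ent b p (\<lambda>\<omega>. (W \<omega>, C \<omega>))"
    "ent b p (\<lambda>\<omega>. (S \<omega>, (Y \<omega>, W \<omega>, C \<omega>))) = ent b p S + ent b p (\<lambda>\<omega>. (Y \<omega>, W \<omega>, C \<omega>))"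
    "ent b p (\<lambda>\<omega>. (S \<omega>, C \<omega>)) = ent b p S + ent b p C"
    by (rule split; rule determinesI; simp)+
  ultimately show ?thesis
    unfolding cmi_def by linarith
qed

end

section \<open>Users and input vectors\<close>

lemma finite_Kset_u: "finite (Kset_u V u)"
  unfolding Kset_u_def by simp

lemma finite_Kset: "finite (Kset U V)"
  unfolding Kset_def by (simp add: finite_Kset_u)

lemma Kset_u_subset_Kset: "u \<in> {1..U} \<Longrightarrow> Kset_u V u \<subseteq> Kset U V"
  unfolding Kset_def by blast

lemma fst_Kset_u: "k \<in> Kset_u V u \<Longrightarrow> fst k = u"
  unfolding Kset_u_def by force

lemma Kset_u_disjoint: "u \<noteq> u' \<Longrightarrow> Kset_u V u \<inter> Kset_u V u' = {}"
  using fst_Kset_u by blast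

lemma not_mem_KsetU_Diff: "k \<in> Kset_u V u \<Longrightarrow> k \<notin> KsetU V (UU - {u})"
  unfolding KsetU_def by (auto dest: fst_Kset_u)

lemma Uset_subset: "Uset U V S T \<subseteq> {1..U}"
  unfolding Uset_def by blast

lemma KsetU_subset_Kset: "UU \<subseteq> {1..U} \<Longrightarrow> KsetU V UU \<subseteq> Kset U V"
  unfolding KsetU_def Kset_def by blast

lemma bij_betw_vecs_PiE:
  "bij_betw (\<lambda>f. restrict f {..<L}) (vecs L) ({..<L} \<rightarrow>\<^sub>E (UNIV :: 'f::zero set))"
proof (rule bij_betwI')
  show "restrict f {..<L} = restrict g {..<L} \<longleftrightarrow> f = g"
    if "f \<in> vecs L" "g \<in> vecs L" for f g :: "nat \<Rightarrow> 'f"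
  proof (intro iffI ext)
    fix i
    assume "restrict f {..<L} = restrict g {..<L}"
    then have "restrict f {..<L} i = restrict g {..<L} i"
      by simp
    then show "f i = g i"
      using that by (cases "i < L") (auto simp: vecs_def)
  qed simp
  show "\<exists>f\<in>vecs L. g = restrict f {..<L}" if "g \<in> {..<L} \<rightarrow>\<^sub>E UNIV" for g :: "nat \<Rightarrow> 'f"
    using that by (intro bexI[of _ "\<lambda>i. if i < L then g i else 0"]) (auto simp: vecs_def PiE_iff extensional_def restrict_def)
qed simp

lemma finite_vecs: "finite (vecs L :: (nat \<Rightarrow> 'f::{zero,finite}) set)"
  by (rule bij_betw_finite[OF bij_betw_vecs_PiE, THEN iffD2]) (simp add: finite_PiE)

lemma card_vecs: "card (vecs L :: (nat \<Rightarrow> 'f::{zero,finite}) set) = CARD('f) ^ L"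
  using bij_betw_same_card[OF bij_betw_vecs_PiE] by (simp add: card_PiE)

lemma vecs_ne: "vecs L \<noteq> {}"
  unfolding vecs_def by auto

lemma card_field_ge_2: "2 \<le> CARD('f::{field,finite})"
  using card_mono[of UNIV "{0::'f, 1}"] by simp

section \<open>Lower bounds on the key rates\<close>

text \<open>Conditions (i) and (iii)--(v) of a WS-HSA scheme, with the inputs uniform on F_q^L.\<close>

locale ws_hsa =
  fixes b :: real and p :: "'w pmf" and U :: nat and V :: "nat \<Rightarrow> nat" and L :: nat
    and W :: "nat \<times> nat \<Rightarrow> 'w \<Rightarrow> (nat \<Rightarrow> 'f::{field,finite})"
    and Z :: "nat \<times> nat \<Rightarrow> 'w \<Rightarrow> 'z" and X :: "nat \<times> nat \<Rightarrow> 'w \<Rightarrow> 'x"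
    and Y :: "nat \<Rightarrow> 'w \<Rightarrow> 'y"
  assumes base_eq_card: "b = real CARD('f)"
    and finite_set_pmf: "finite (set_pmf p)"
    and W_uniform: "\<forall>k\<in>Kset U V. \<forall>f\<in>vecs L. measure_pmf.prob p (W k -` {f}) = 1 / b ^ L"
    and W_Z_independent: "ent b p (\<lambda>\<omega>. (fam W (Kset U V) \<omega>, fam Z (Kset U V) \<omega>))
      = (\<Sum>k\<in>Kset U V. ent b p (W k)) + ent b p (fam Z (Kset U V))"
    and X_encoded: "\<forall>k\<in>Kset U V. cent b p (X k) (\<lambda>\<omega>. (W k \<omega>, Z k \<omega>)) = 0"
    and Y_relayed: "\<forall>u\<in>{1..U}. cent b p (Y u) (fam X (Kset_u V u)) = 0"
    and sum_decodable: "cent b p (\<lambda>\<omega> i. \<Sum>k\<in>Kset U V. W k \<omega> i) (fam Y {1..U}) = 0"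
begin

sublocale finite_entropy b p
  using card_field_ge_2[where 'f='f] base_eq_card finite_set_pmf by unfold_locales simp_all

abbreviation K where "K \<equiv> Kset U V"

abbreviation sumW where "sumW \<equiv> \<lambda>\<omega> i. \<Sum>k\<in>K. W k \<omega> i"

definition WZ_on where "WZ_on C = (\<lambda>\<omega>. (fam W C \<omega>, fam Z C \<omega>))"

abbreviation WZ_off where "WZ_off C \<equiv> WZ_on (K - C)"

lemma WZ_on_eq_iff: "WZ_on C \<omega> = WZ_on C \<omega>' \<longleftrightarrow> (\<forall>k\<in>C. W k \<omega> = W k \<omega>' \<and> Z k \<omega> = Z k \<omega>')"
  unfolding WZ_on_def by (auto simp: fam_eq_iff)

lemma determines_WZ_on_mono: "C \<subseteq> D \<Longrightarrow> determines p (WZ_on D) (WZ_on C)"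
  by (rule determinesI) (auto simp: WZ_on_eq_iff)

lemma determines_WZ_on_Un: "determines p (\<lambda>\<omega>. (fam Z A \<omega>, fam W A \<omega>, WZ_on T \<omega>)) (WZ_on (A \<union> T))"
  by (rule determinesI) (auto simp: fam_eq_iff WZ_on_eq_iff)

lemma X_eqI:
  assumes "k \<in> K" "\<omega> \<in> set_pmf p" "\<omega>' \<in> set_pmf p" "W k \<omega> = W k \<omega>'" "Z k \<omega> = Z k \<omega>'"
  shows "X k \<omega> = X k \<omega>'"
  using determines_if_cent_eq_0[of "X k" "\<lambda>\<omega>. (W k \<omega>, Z k \<omega>)"] X_encoded assms
  by (auto dest: determinesD)

lemma Y_eqI_from_X:
  assumes "u \<in> {1..U}" "\<omega> \<in> set_pmf p" "\<omega>' \<in> set_pmf p" "\<forall>k\<in>Kset_u V u. X k \<omega> = X k \<omega>'"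
  shows "Y u \<omega> = Y u \<omega>'"
  using determines_if_cent_eq_0[of "Y u" "fam X (Kset_u V u)"] Y_relayed assms
  by (auto simp: fam_eq_iff dest: determinesD)

lemma Y_eqI:
  assumes "u \<in> {1..U}" "\<omega> \<in> set_pmf p" "\<omega>' \<in> set_pmf p"
    and "\<forall>k\<in>Kset_u V u. W k \<omega> = W k \<omega>' \<and> Z k \<omega> = Z k \<omega>'"
  shows "Y u \<omega> = Y u \<omega>'"
  using assms Kset_u_subset_Kset[OF assms(1)] by (blast intro: Y_eqI_from_X X_eqI)

lemma W_eqI_from_sumW:
  assumes "a \<in> K" "sumW \<omega> = sumW \<omega>'" "\<forall>k\<in>K - {a}. W k \<omega> = W k \<omega>'"
  shows "W a \<omega> = W a \<omega>'"
proof
  fix i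
  have "W a \<omega> i + (\<Sum>k\<in>K - {a}. W k \<omega> i) = W a \<omega>' i + (\<Sum>k\<in>K - {a}. W k \<omega>' i)"
    using fun_cong[OF assms(2), of i] assms(1) finite_Kset by (simp add: sum.remove)
  then show "W a \<omega> i = W a \<omega>' i"
    using assms(3) by simp
qed

lemma W_eqI_from_Y:
  assumes "a \<in> K" "\<omega> \<in> set_pmf p" "\<omega>' \<in> set_pmf p"
    and "\<forall>u\<in>{1..U}. Y u \<omega> = Y u \<omega>'" "\<forall>k\<in>K - {a}. W k \<omega> = W k \<omega>'"
  shows "W a \<omega> = W a \<omega>'"
proof (rule W_eqI_from_sumW[OF assms(1) _ assms(5)])
  show "sumW \<omega> = sumW \<omega>'"
    using determines_if_cent_eq_0[OF sum_decodable] assms(2-4)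
    by (auto simp: fam_eq_iff dest: determinesD)
qed

lemma WZ_on_determines_X: "D \<subseteq> K \<Longrightarrow> A \<subseteq> D \<Longrightarrow> determines p (WZ_on D) (fam X A)"
  by (rule determinesI) (auto simp: fam_eq_iff WZ_on_eq_iff intro: X_eqI)

lemma WZ_on_determines_Y:
  assumes "UU \<subseteq> {1..U}" "\<And>u. u \<in> UU \<Longrightarrow> Kset_u V u \<subseteq> D"
  shows "determines p (WZ_on D) (fam Y UU)"
  using assms by (intro determinesI) (auto simp: fam_eq_iff WZ_on_eq_iff intro!: Y_eqI)

lemma W_uniform_card:
  "k \<in> K \<Longrightarrow> \<forall>f\<in>vecs L. measure_pmf.prob p (W k -` {f}) = 1 / real (card (vecs L :: (nat \<Rightarrow> 'f) set))"
  using W_uniform by (simp add: card_vecs base_eq_card)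

lemma log_card_vecs: "log b (card (vecs L :: (nat \<Rightarrow> 'f) set)) = L"
  using base_gt_1 by (simp add: card_vecs base_eq_card log_nat_power)

lemma W_range: "k \<in> K \<Longrightarrow> \<omega> \<in> set_pmf p \<Longrightarrow> W k \<omega> \<in> vecs L"
  by (rule range_if_uniform[OF finite_vecs vecs_ne W_uniform_card])

lemma ent_W: "k \<in> K \<Longrightarrow> ent b p (W k) = L"
  using ent_uniform[OF finite_vecs vecs_ne W_uniform_card] log_card_vecs by simp

lemma ent_sumW_le: "ent b p sumW \<le> L"
proof -
  have "ent b p sumW \<le> log b (card (vecs L :: (nat \<Rightarrow> 'f) set))"
    using W_range by (intro ent_le_log_card[OF finite_vecs]) (auto simp: vecs_def)
  also have "\<dots> = L"
    by (rule log_card_vecs)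
  finally show ?thesis .
qed

lemma cent_W_independent:
  assumes "B \<subseteq> K" and G: "determines p (\<lambda>\<omega>. (fam W (K - B) \<omega>, fam Z K \<omega>)) G"
  shows "cent b p (fam W B) G = ent b p (fam W B)"
proof (rule cent_eq_ent_if_determined[OF _ G])
  let ?R = "\<lambda>\<omega>. (fam W (K - B) \<omega>, fam Z K \<omega>)"
  have "finite B"
    using \<open>B \<subseteq> K\<close> finite_Kset finite_subset by blast
  have "ent b p (\<lambda>\<omega>. (fam W K \<omega>, fam Z K \<omega>)) = ent b p (\<lambda>\<omega>. (fam W B \<omega>, ?R \<omega>))"
    using \<open>B \<subseteq> K\<close> by (intro ent_eqI) (auto simp: fam_eq_iff)
  moreover have "(\<Sum>k\<in>K. ent b p (W k)) = (\<Sum>k\<in>B. ent b p (W k)) + (\<Sum>k\<in>K - B. ent b p (W k))"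
    using \<open>B \<subseteq> K\<close> finite_Kset by (simp add: sum.subset_diff[of B K])
  ultimately show "cent b p (fam W B) ?R = ent b p (fam W B)"
    unfolding cent_def
    using W_Z_independent ent_pair_le_add[of "fam W B" ?R] ent_pair_le_add[of "fam W (K - B)" "fam Z K"]
      ent_fam_le_sum[OF \<open>finite B\<close>, of W] ent_fam_le_sum[of "K - B" W] finite_Kset
    by simp
qed

lemma cent_W_eq_L:
  assumes "a \<in> K" and G: "determines p (\<lambda>\<omega>. (fam W (K - {a}) \<omega>, fam Z K \<omega>)) G"
  shows "cent b p (W a) G = L"
proof -
  have "ent b p (\<lambda>\<omega>. (W a \<omega>, G \<omega>)) = ent b p (\<lambda>\<omega>. (fam W {a} \<omega>, G \<omega>))"
    "ent b p (W a) = ent b p (fam W {a})"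
    by (rule ent_eqI; simp add: fam_eq_iff)+
  then show ?thesis
    using cent_W_independent[of "{a}", OF _ G] ent_W \<open>a \<in> K\<close> unfolding cent_def by simp
qed

lemma cent_X_ge_L:
  assumes "a \<in> K"
  shows "L \<le> cent b p (X a) (WZ_off {a})"
proof -
  have "L = cent b p (W a) (WZ_off {a})"
    by (rule cent_W_eq_L[OF assms, symmetric], rule determinesI) (auto simp: fam_eq_iff WZ_on_eq_iff)
  also have "\<dots> \<le> cent b p (X a) (WZ_off {a})"
  proof (rule cent_le_cent_if_determines, rule determinesI)
    fix \<omega> \<omega>' assume \<omega>: "\<omega> \<in> set_pmf p" "\<omega>' \<in> set_pmf p"
      and eq: "(X a \<omega>, WZ_off {a} \<omega>) = (X a \<omega>', WZ_off {a} \<omega>')"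
    have "X k \<omega> = X k \<omega>'" if "k \<in> K" for k
    proof (cases "k = a")
      case False
      then show ?thesis
        using eq \<omega> that by (intro X_eqI) (auto simp: WZ_on_eq_iff)
    qed (use eq in simp)
    then have "\<forall>u\<in>{1..U}. Y u \<omega> = Y u \<omega>'"
      using Kset_u_subset_Kset \<omega> by (blast intro: Y_eqI_from_X)
    then show "W a \<omega> = W a \<omega>'"
      using eq \<omega> \<open>a \<in> K\<close> by (intro W_eqI_from_Y) (auto simp: WZ_on_eq_iff)
  qed
  finally show ?thesis .
qed

lemma cent_fam_X_ge:
  assumes "A \<subseteq> K"
  shows "card A * L \<le> cent b p (fam X A) (WZ_off A)"
  using finite_subset[OF assms finite_Kset] assms
proof (induction A rule: finite_subset_induct')
  case empty
  then show ?case by (simp add: cent_nonneg)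
next
  case (insert a A)
  have "cent b p (X a) (WZ_off {a}) \<le> cent b p (X a) (\<lambda>\<omega>. (fam X A \<omega>, WZ_off (insert a A) \<omega>))"
    using insert by (intro cent_mono_cond determines_pairI WZ_on_determines_X determines_WZ_on_mono) auto
  moreover have "cent b p (fam X A) (WZ_off A) \<le> cent b p (fam X A) (WZ_off (insert a A))"
    by (intro cent_mono_cond determines_WZ_on_mono) auto
  ultimately show ?case
    using insert cent_X_ge_L[of a] cent_fam_insert[of X a A "WZ_off (insert a A)"]
    by (simp add: algebra_simps)
qed

lemma cent_Z_given_W_eq:
  assumes "A \<subseteq> K" "T \<subseteq> K"
  shows "cent b p (fam Z A) (\<lambda>\<omega>. (fam W A \<omega>, WZ_on T \<omega>)) = cent b p (fam Z A) (fam Z T)"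
proof -
  have "ent b p (\<lambda>\<omega>. (fam Z A \<omega>, fam W A \<omega>, WZ_on T \<omega>))
      = ent b p (\<lambda>\<omega>. (fam W (A \<union> T) \<omega>, fam Z A \<omega>, fam Z T \<omega>))"
    "ent b p (\<lambda>\<omega>. (fam W A \<omega>, WZ_on T \<omega>)) = ent b p (\<lambda>\<omega>. (fam W (A \<union> T) \<omega>, fam Z T \<omega>))"
    by (rule ent_eqI; auto simp: fam_eq_iff WZ_on_def)+
  moreover have "cent b p (fam W (A \<union> T)) (\<lambda>\<omega>. (fam Z A \<omega>, fam Z T \<omega>)) = ent b p (fam W (A \<union> T))"
    "cent b p (fam W (A \<union> T)) (fam Z T) = ent b p (fam W (A \<union> T))"
    using assms by (intro cent_W_independent determinesI; auto simp: fam_eq_iff)+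
  ultimately show ?thesis
    unfolding cent_def by simp
qed

lemma cent_Z_user_ge:
  assumes "S \<subseteq> K" "T \<subseteq> K" "S \<inter> T = {}" "u \<in> {1..U}"
    and secure: "cmi b p (fam X (Kset_u V u)) (fam W S) (fam (\<lambda>k \<omega>. (W k \<omega>, Z k \<omega>)) T) = 0"
  shows "card (S \<inter> Kset_u V u) * L \<le> cent b p (fam Z (S \<inter> Kset_u V u)) (fam Z T)"
proof -
  define A where "A = S \<inter> Kset_u V u"
  have "A \<subseteq> K" "T \<subseteq> K - A"
    using assms by (auto simp: A_def)
  have "cmi b p (fam X A) (fam W A) (WZ_on T)
      = cmi b p (fam X A) (fam W A) (fam (\<lambda>k \<omega>. (W k \<omega>, Z k \<omega>)) T)"
    by (rule cmi_cong_cond) (auto simp: fam_eq_iff WZ_on_eq_iff)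
  also have "\<dots> \<le> cmi b p (fam X (Kset_u V u)) (fam W S) (fam (\<lambda>k \<omega>. (W k \<omega>, Z k \<omega>)) T)"
    by (intro cmi_mono determines_fam_subset) (auto simp: A_def)
  also have "\<dots> = 0"
    by (rule secure)
  finally have independent: "cmi b p (fam X A) (fam W A) (WZ_on T) = 0"
    using cmi_nonneg[of "fam X A" "fam W A" "WZ_on T"] by linarith
  have "card A * L \<le> cent b p (fam X A) (WZ_off A)"
    using cent_fam_X_ge[OF \<open>A \<subseteq> K\<close>] .
  also have "\<dots> \<le> cent b p (fam X A) (WZ_on T)"
    using \<open>T \<subseteq> K - A\<close> by (intro cent_mono_cond determines_WZ_on_mono)
  also have "\<dots> = cent b p (fam X A) (\<lambda>\<omega>. (fam W A \<omega>, WZ_on T \<omega>))"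
    using independent by (simp add: cmi_eq_cent_diff)
  also have "\<dots> \<le> cent b p (fam Z A) (\<lambda>\<omega>. (fam W A \<omega>, WZ_on T \<omega>))"
  proof (rule cent_le_cent_if_determines)
    have "determines p (WZ_on (A \<union> T)) (fam X A)"
      using \<open>A \<subseteq> K\<close> \<open>T \<subseteq> K\<close> by (intro WZ_on_determines_X) auto
    then show "determines p (\<lambda>\<omega>. (fam Z A \<omega>, fam W A \<omega>, WZ_on T \<omega>)) (fam X A)"
      using determines_WZ_on_Un by (rule determines_trans)
  qed
  also have "\<dots> = cent b p (fam Z A) (fam Z T)"
    using \<open>A \<subseteq> K\<close> \<open>T \<subseteq> K\<close> by (rule cent_Z_given_W_eq)
  finally show ?thesis
    by (simp add: A_def)
qed

lemma cent_Y_ge_L: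
  assumes "u \<in> {1..U}" "a \<in> S \<inter> Kset_u V u"
  shows "L \<le> cent b p (Y u) (WZ_off (S \<inter> Kset_u V u))"
proof -
  let ?R = "\<lambda>\<omega>. (fam W (K - {a}) \<omega>, fam Z (K - S \<inter> Kset_u V u) \<omega>)"
  have "a \<in> K"
    using assms Kset_u_subset_Kset by blast
  have "L = cent b p (W a) ?R"
    by (rule cent_W_eq_L[OF \<open>a \<in> K\<close>, symmetric], rule determinesI) (auto simp: fam_eq_iff)
  also have "\<dots> \<le> cent b p (Y u) ?R"
  proof (rule cent_le_cent_if_determines, rule determinesI)
    fix \<omega> \<omega>' assume \<omega>: "\<omega> \<in> set_pmf p" "\<omega>' \<in> set_pmf p"
      and eq: "(Y u \<omega>, ?R \<omega>) = (Y u \<omega>', ?R \<omega>')"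
    have "Y u' \<omega> = Y u' \<omega>'" if "u' \<in> {1..U}" for u'
    proof (cases "u' = u")
      case False
      then have "Kset_u V u' \<subseteq> K - {a}" "Kset_u V u' \<subseteq> K - S \<inter> Kset_u V u"
        using Kset_u_disjoint[of u' u V] Kset_u_subset_Kset[OF that] assms(2) by auto
      then show ?thesis
        using eq \<omega> that by (intro Y_eqI) (auto simp: fam_eq_iff)
    qed (use eq in simp)
    then show "W a \<omega> = W a \<omega>'"
      using eq \<omega> \<open>a \<in> K\<close> by (intro W_eqI_from_Y) (auto simp: fam_eq_iff)
  qed
  also have "\<dots> \<le> cent b p (Y u) (WZ_off (S \<inter> Kset_u V u))"
    using assms(2) by (intro cent_mono_cond determinesI) (auto simp: fam_eq_iff WZ_on_eq_iff)
  finally show ?thesis .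
qed

lemma cent_fam_Y_ge:
  assumes "UU \<subseteq> Uset U V S T"
  shows "card UU * L \<le> cent b p (fam Y UU) (WZ_off (KsetU V UU \<inter> S))"
  using finite_subset[OF assms finite_subset[OF Uset_subset finite_atLeastAtMost]] assms
proof (induction UU rule: finite_subset_induct')
  case empty
  then show ?case by (simp add: cent_nonneg)
next
  case (insert u UU)
  let ?B = "KsetU V UU \<inter> S" and ?B' = "KsetU V (insert u UU) \<inter> S"
  have u: "u \<in> {1..U}" and "S \<inter> Kset_u V u \<noteq> {}"
    using insert.hyps(2) by (auto simp: Uset_def)
  then obtain a where a: "a \<in> S \<inter> Kset_u V u"
    by blast
  have "UU \<subseteq> {1..U}"
    using insert.hyps(3) Uset_subset by blast
  have "Kset_u V u' \<subseteq> K - S \<inter> Kset_u V u" if "u' \<in> UU" for u'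
    using Kset_u_disjoint[of u' u V] Kset_u_subset_Kset[of u' U V] \<open>UU \<subseteq> {1..U}\<close> that insert.hyps(4)
    by blast
  then have "cent b p (Y u) (WZ_off (S \<inter> Kset_u V u))
      \<le> cent b p (Y u) (\<lambda>\<omega>. (fam Y UU \<omega>, WZ_off ?B' \<omega>))"
    using \<open>UU \<subseteq> {1..U}\<close>
    by (intro cent_mono_cond determines_pairI WZ_on_determines_Y determines_WZ_on_mono)
      (auto simp: KsetU_def)
  moreover have "cent b p (fam Y UU) (WZ_off ?B) \<le> cent b p (fam Y UU) (WZ_off ?B')"
    by (intro cent_mono_cond determines_WZ_on_mono) (auto simp: KsetU_def)
  ultimately show ?case
    using insert cent_Y_ge_L[OF u a] cent_fam_insert[of Y u UU "WZ_off ?B'"]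
    by (simp add: algebra_simps)
qed

lemma cent_sumW_independent:
  assumes "k0 \<in> K" and G: "determines p (\<lambda>\<omega>. (fam W (K - {k0}) \<omega>, fam Z K \<omega>)) G"
  shows "cent b p sumW G = ent b p sumW"
proof -
  let ?R = "\<lambda>\<omega>. (fam W (K - {k0}) \<omega>, fam Z K \<omega>)"
  have "ent b p (\<lambda>\<omega>. (sumW \<omega>, ?R \<omega>)) = ent b p (\<lambda>\<omega>. (W k0 \<omega>, ?R \<omega>))"
  proof (rule ent_eqI, rule iffI)
    fix \<omega> \<omega>'
    assume eq: "(sumW \<omega>, ?R \<omega>) = (sumW \<omega>', ?R \<omega>')"
    then have "W k0 \<omega> = W k0 \<omega>'"
      by (intro W_eqI_from_sumW[OF \<open>k0 \<in> K\<close>]) (auto simp: fam_eq_iff)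
    with eq show "(W k0 \<omega>, ?R \<omega>) = (W k0 \<omega>', ?R \<omega>')"
      by simp
  next
    fix \<omega> \<omega>'
    assume eq: "(W k0 \<omega>, ?R \<omega>) = (W k0 \<omega>', ?R \<omega>')"
    then have "\<forall>k\<in>K. W k \<omega> = W k \<omega>'"
      by (auto simp: fam_eq_iff)
    then have "sumW \<omega> = sumW \<omega>'"
      by (auto intro!: sum.cong)
    with eq show "(sumW \<omega>, ?R \<omega>) = (sumW \<omega>', ?R \<omega>')"
      by simp
  qed
  moreover have "cent b p (W k0) ?R = L"
    by (rule cent_W_eq_L[OF \<open>k0 \<in> K\<close>], rule determinesI) simp
  ultimately have "cent b p sumW ?R = L"
    unfolding cent_def by simp
  then show ?thesis
    using cent_mono_cond[OF G, of sumW] cent_le_ent[of sumW G] ent_sumW_le by linarith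
qed

lemma cmi_fam_Y_fam_W_eq_0:
  assumes "B \<subseteq> S" "S \<subseteq> K" "T \<subseteq> K" "UU \<subseteq> {1..U}"
    and k0: "k0 \<in> K" "k0 \<notin> KsetU V UU \<union> B \<union> T"
    and secure: "cmi b p (fam Y {1..U}) (fam W S) (\<lambda>\<omega>. (sumW \<omega>, fam (\<lambda>k \<omega>. (W k \<omega>, Z k \<omega>)) T \<omega>)) = 0"
  shows "cmi b p (fam Y UU) (fam W B) (WZ_on T) = 0"
proof -
  have "cmi b p (fam Y UU) (fam W B) (\<lambda>\<omega>. (sumW \<omega>, WZ_on T \<omega>))
      = cmi b p (fam Y UU) (fam W B) (\<lambda>\<omega>. (sumW \<omega>, fam (\<lambda>k \<omega>. (W k \<omega>, Z k \<omega>)) T \<omega>))"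
    by (rule cmi_cong_cond) (auto simp: fam_eq_iff WZ_on_eq_iff)
  also have "\<dots> \<le> cmi b p (fam Y {1..U}) (fam W S) (\<lambda>\<omega>. (sumW \<omega>, fam (\<lambda>k \<omega>. (W k \<omega>, Z k \<omega>)) T \<omega>))"
    using assms(1,4) by (intro cmi_mono determines_fam_subset)
  finally have "cmi b p (fam Y UU) (fam W B) (\<lambda>\<omega>. (sumW \<omega>, WZ_on T \<omega>)) = 0"
    using secure cmi_nonneg[of "fam Y UU" "fam W B" "\<lambda>\<omega>. (sumW \<omega>, WZ_on T \<omega>)"] by linarith
  moreover have "cent b p sumW (\<lambda>\<omega>. (fam Y UU \<omega>, fam W B \<omega>, WZ_on T \<omega>)) = ent b p sumW"
  proof (rule cent_sumW_independent[OF k0(1)])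
    have "Kset_u V u \<subseteq> K - {k0}" if "u \<in> UU" for u
    proof -
      have "Kset_u V u \<subseteq> K"
        using that \<open>UU \<subseteq> {1..U}\<close> Kset_u_subset_Kset by blast
      then show ?thesis
        using that k0 by (auto simp: KsetU_def)
    qed
    then have "determines p (WZ_on (K - {k0})) (fam Y UU)"
      using \<open>UU \<subseteq> {1..U}\<close> by (intro WZ_on_determines_Y)
    moreover have "determines p (WZ_on (K - {k0})) (fam W B)"
      using assms(1,2) k0 by (intro determinesI) (auto simp: fam_eq_iff WZ_on_eq_iff)
    moreover have "determines p (WZ_on (K - {k0})) (WZ_on T)"
      using \<open>T \<subseteq> K\<close> k0 by (intro determines_WZ_on_mono) auto
    ultimately have "determines p (WZ_on (K - {k0})) (\<lambda>\<omega>. (fam Y UU \<omega>, fam W B \<omega>, WZ_on T \<omega>))"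
      by (intro determines_pairI)
    then show "determines p (\<lambda>\<omega>. (fam W (K - {k0}) \<omega>, fam Z K \<omega>)) (\<lambda>\<omega>. (fam Y UU \<omega>, fam W B \<omega>, WZ_on T \<omega>))"
      by (rule determines_trans) (rule determinesI, auto simp: fam_eq_iff WZ_on_eq_iff)
  qed
  ultimately show ?thesis
    by (simp add: cmi_drop_independent_cond)
qed

lemma cent_Z_Uset_ge_card:
  assumes "S \<subseteq> K" "T \<subseteq> K" "S \<inter> T = {}" "UU \<subseteq> Uset U V S T"
    and k0: "k0 \<in> K" "k0 \<notin> KsetU V UU \<union> T"
    and secure: "cmi b p (fam Y {1..U}) (fam W S) (\<lambda>\<omega>. (sumW \<omega>, fam (\<lambda>k \<omega>. (W k \<omega>, Z k \<omega>)) T \<omega>)) = 0"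
  shows "card UU * L \<le> cent b p (fam Z (KsetU V (Uset U V S T))) (fam Z T)"
proof -
  define B where "B = KsetU V UU \<inter> S"
  have "B \<subseteq> K" "T \<subseteq> K - B" "UU \<subseteq> {1..U}"
    using assms Uset_subset[of U V S T] by (auto simp: B_def)
  then have independent: "cmi b p (fam Y UU) (fam W B) (WZ_on T) = 0"
    using k0 by (intro cmi_fam_Y_fam_W_eq_0[OF _ \<open>S \<subseteq> K\<close> \<open>T \<subseteq> K\<close> _ k0(1) _ secure])
      (auto simp: B_def KsetU_def)
  have "card UU * L \<le> cent b p (fam Y UU) (WZ_off B)"
    using cent_fam_Y_ge[OF assms(4)] by (simp add: B_def)
  also have "\<dots> \<le> cent b p (fam Y UU) (WZ_on T)"
    using \<open>T \<subseteq> K - B\<close> by (intro cent_mono_cond determines_WZ_on_mono)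
  also have "\<dots> = cent b p (fam Y UU) (\<lambda>\<omega>. (fam W B \<omega>, WZ_on T \<omega>))"
    using independent by (simp add: cmi_eq_cent_diff)
  also have "\<dots> \<le> cent b p (fam Z B) (\<lambda>\<omega>. (fam W B \<omega>, WZ_on T \<omega>))"
  proof (rule cent_le_cent_if_determines)
    have "Kset_u V u \<subseteq> B \<union> T" if "u \<in> UU" for u
      using that assms(4) by (auto simp: Uset_def B_def KsetU_def)
    then have "determines p (WZ_on (B \<union> T)) (fam Y UU)"
      using \<open>UU \<subseteq> {1..U}\<close> by (intro WZ_on_determines_Y)
    then show "determines p (\<lambda>\<omega>. (fam Z B \<omega>, fam W B \<omega>, WZ_on T \<omega>)) (fam Y UU)"
      using determines_WZ_on_Un by (rule determines_trans)
  qed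
  also have "\<dots> = cent b p (fam Z B) (fam Z T)"
    using \<open>B \<subseteq> K\<close> \<open>T \<subseteq> K\<close> by (rule cent_Z_given_W_eq)
  also have "\<dots> \<le> cent b p (fam Z (KsetU V (Uset U V S T))) (fam Z T)"
    using assms(4) by (intro cent_mono_left determines_fam_subset) (auto simp: B_def KsetU_def)
  finally show ?thesis .
qed

lemma cent_Z_Uset_ge:
  assumes "S \<subseteq> K" "T \<subseteq> K" "S \<inter> T = {}"
    and secure: "cmi b p (fam Y {1..U}) (fam W S) (\<lambda>\<omega>. (sumW \<omega>, fam (\<lambda>k \<omega>. (W k \<omega>, Z k \<omega>)) T \<omega>)) = 0"
  shows "(if card (KsetU V (Uset U V S T) \<union> T) = card K
          then (real (card (Uset U V S T)) - 1) * real L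
          else real (card (Uset U V S T)) * real L)
         \<le> cent b p (fam Z (KsetU V (Uset U V S T))) (fam Z T)"
proof -
  let ?UU = "Uset U V S T"
  have "KsetU V ?UU \<union> T \<subseteq> K"
    using KsetU_subset_Kset[OF Uset_subset] \<open>T \<subseteq> K\<close> by blast
  then have card_eq_iff: "card (KsetU V ?UU \<union> T) = card K \<longleftrightarrow> KsetU V ?UU \<union> T = K"
    using card_subset_eq[OF finite_Kset] by metis
  show ?thesis
  proof (cases "KsetU V ?UU \<union> T = K")
    case False
    then obtain k0 where "k0 \<in> K" "k0 \<notin> KsetU V ?UU \<union> T"
      using \<open>KsetU V ?UU \<union> T \<subseteq> K\<close> by blast
    then show ?thesis
      using cent_Z_Uset_ge_card[OF assms(1-3) order_refl _ _ secure] False card_eq_iff by simp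
  next
    case True
    show ?thesis
    proof (cases "?UU = {}")
      case True
      then show ?thesis
        using cent_nonneg[of "fam Z (KsetU V ?UU)" "fam Z T"] by simp
    next
      case False
      then obtain u0 k0 where u0: "u0 \<in> ?UU" and k0: "k0 \<in> S \<inter> Kset_u V u0"
        by (auto simp: Uset_def)
      have "card (?UU - {u0}) * L \<le> cent b p (fam Z (KsetU V ?UU)) (fam Z T)"
        using k0 assms not_mem_KsetU_Diff[of k0 V u0 ?UU]
        by (intro cent_Z_Uset_ge_card[OF assms(1-3) _ _ _ secure]) auto
      moreover have "card (?UU - {u0}) = card ?UU - 1" "card ?UU \<ge> 1"
        using u0 finite_subset[OF Uset_subset] by (auto simp: card_gt_0_iff Suc_le_eq)
      ultimately show ?thesis
        using \<open>KsetU V ?UU \<union> T = K\<close> by (simp add: of_nat_diff)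
    qed
  qed
qed

end

theorem lemma3:
  fixes U M N L :: nat and V :: "nat \<Rightarrow> nat"
    and S T :: "nat \<Rightarrow> (nat \<times> nat) set"
    and p :: "'w pmf"
    and W :: "nat \<times> nat \<Rightarrow> 'w \<Rightarrow> (nat \<Rightarrow> 'f::{field,finite})"
    and ZS :: "'w \<Rightarrow> 's"
    and Z :: "nat \<times> nat \<Rightarrow> 'w \<Rightarrow> 'z"
    and X :: "nat \<times> nat \<Rightarrow> 'w \<Rightarrow> 'x"
    and Y :: "nat \<Rightarrow> 'w \<Rightarrow> 'y"
    and u m n :: nat
  defines "q \<equiv> real CARD('f)"
    and "K \<equiv> Kset U V"
    and "sumW \<equiv> (\<lambda>\<omega> i. \<Sum>k\<in>Kset U V. W k \<omega> i)"
    and "WZ \<equiv> (\<lambda>k \<omega>. (W k \<omega>, Z k \<omega>))"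
  assumes U2: "U \<ge> 2"
    and V1: "\<forall>u\<in>{1..U}. V u \<ge> 1"
    and S_sub: "\<forall>m\<in>{1..M}. S m \<subseteq> K" and S_closed: "subset_closed M S"
    and T_sub: "\<forall>n\<in>{1..N}. T n \<subseteq> K" and T_closed: "subset_closed N T"
    and fin: "finite (set_pmf p)"
    and unif: "\<forall>k\<in>K. \<forall>f\<in>vecs L. measure_pmf.prob p (W k -` {f}) = 1 / q ^ L"
    and c1: "ent q p (\<lambda>\<omega>. (fam W K \<omega>, fam Z K \<omega>))
              = (\<Sum>k\<in>K. ent q p (W k)) + ent q p (fam Z K)"
    and c2: "cent q p (fam Z K) ZS = 0"
    and c3: "\<forall>k\<in>K. cent q p (X k) (WZ k) = 0"
    and c4: "\<forall>u\<in>{1..U}. cent q p (Y u) (fam X (Kset_u V u)) = 0"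
    and c5: "cent q p sumW (fam Y {1..U}) = 0"
    and c6: "\<forall>m\<in>{1..M}. \<forall>n\<in>{1..N}.
              cmi q p (fam Y {1..U}) (fam W (S m)) (\<lambda>\<omega>. (sumW \<omega>, fam WZ (T n) \<omega>)) = 0"
    and c7: "\<forall>u\<in>{1..U}. \<forall>m\<in>{1..M}. \<forall>n\<in>{1..N}.
              cmi q p (fam X (Kset_u V u)) (fam W (S m)) (fam WZ (T n)) = 0"
    and u: "u \<in> {1..U}" and m: "m \<in> {1..M}" and n: "n \<in> {1..N}"
    and disj: "S m \<inter> T n = {}"
    and small: "card ((S m \<inter> Kset_u V u) \<union> T n) \<le> card K - 1"
  shows "cent q p (fam Z (S m \<inter> Kset_u V u)) (fam Z (T n))
           \<ge> real (card (S m \<inter> Kset_u V u)) * real L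
         \<and> cent q p (fam Z (KsetU V (Uset U V (S m) (T n)))) (fam Z (T n))
           \<ge> (if card (KsetU V (Uset U V (S m) (T n)) \<union> T n) = card K
              then (real (card (Uset U V (S m) (T n))) - 1) * real L
              else real (card (Uset U V (S m) (T n))) * real L)"
proof -
  interpret ws_hsa q p U V L W Z X Y
    using fin unif c1 c3 c4 c5 unfolding q_def K_def WZ_def sumW_def
    by unfold_locales simp_all
  have "S m \<subseteq> Kset U V" "T n \<subseteq> Kset U V"
    using S_sub T_sub m n unfolding K_def by blast+
  then show ?thesis
    using cent_Z_user_ge[OF _ _ disj u] cent_Z_Uset_ge[OF _ _ disj] c6 c7 m n u
    unfolding K_def WZ_def sumW_def by auto
qed

end
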